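(* Let $f$ be a tolerance function with $0<f(K)<K$ satisfying $$\lim_{K\to\infty}\frac{K-f(K)}{\ln K}=0.$$ Then $p=\lim_{n\to\infty}P(\mathbf y\in L(\mathbf x))>0$ implies $P(\mathbf y\in I(\mathbf x,f))=1$. Furthermore, if $p>0.5$, it suffices that $f$ satisfies $$\lim_{K\to\infty}\frac{K}{(K-f(K))\,2^{K-f(K)}}=+\infty$$ to obtain $P(\mathbf y\in I(\mathbf x,f))=1$.
   Context: Setting: $n$ instances form the dataset $\mathcal D=\mathcal D_n$; a forest $\Theta_K$ of $K$ axis-aligned causal trees is built on $\mathcal D$, the trees independent given $\mathcal D$. $L_k(\mathbf x)$ is the leaf of tree $k$ containing $\mathbf x$, $I(\mathbf x,\theta_k)$ its box; $P(\mathbf y\in L(\mathbf x))=P(\mathbf y\in L_k(\mathbf x)\mid\mathcal D)$, same for every $k$, with the events independent across $k$. LILI with $K$ trees under tolerance function $f$: $I(\mathbf x,\Theta_K,f)=\bigcup_{s>K-f(K)}\bigcup_{1\le i_1<\cdots<i_s\le K}\bigcap_{k=1}^sI(\mathbf x,\theta_{i_k})$, i.e. $\mathbf y\in I(\mathbf x,\Theta_K,f)$ iff the number of $k$ with $\mathbf y\in L_k(\mathbf x)$ exceeds $K-f(K)$; $P(\mathbf y\in I(\mathbf x,f)):=\lim_{K\to\infty}\lim_{n\to\infty}P(\mathbf y\in I(\mathbf x,\Theta_K,f)\mid\mathcal D_n)$. *)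

theory Defs
  imports "HOL-Probability.Probability"
begin

text \<open>Here E k is the event that y lies in the leaf L_k(x) of tree k.\<close>
definition lili_event :: "'a measure \<Rightarrow> (nat \<Rightarrow> 'a set) \<Rightarrow> nat \<Rightarrow> (nat \<Rightarrow> real) \<Rightarrow> 'a set" where
  "lili_event M E K f =
     (\<Union>S\<in>{S. S \<subseteq> {..<K} \<and> real (card S) > real K - f K}. space M \<inter> (\<Inter>k\<in>S. E k))"

end

(*
  For fixed K, the number of trees whose leaf contains y is binomially distributed with
  parameters K and P(y in L(x)), so the LILI probability is the binomial tail
  P(Bin(K, p_n) > K - f(K)), which tends to the same tail at p as n -> oo.
  With m = K - f(K), the complementary probability P(Bin(K, p) <= m) is at most
  (m + 1) K^m (1 - p)^(K - m): there are at most (m + 1) K^m index sets of size at most m,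
  and each outcome with at most m hits has at least K - m misses. For p > 0 this bound
  tends to 0 as soon as m = O(ln K). Both growth conditions of the theorem imply
  m = O(ln K); the second one does so without using p > 1/2, only p > 0.
*)
theory Submission
  imports Defs "HOL-Real_Asymp.Real_Asymp"
begin

definition binomial_prob :: "nat \<Rightarrow> real \<Rightarrow> (nat \<Rightarrow> bool) \<Rightarrow> real" where
  "binomial_prob K x P = (\<Sum>j | j \<le> K \<and> P j. real (K choose j) * x ^ j * (1 - x) ^ (K - j))"

lemma binomial_prob_nonneg: "0 \<le> x \<Longrightarrow> x \<le> 1 \<Longrightarrow> 0 \<le> binomial_prob K x P"
  unfolding binomial_prob_def by (intro sum_nonneg) auto

lemma binomial_prob_compl: "binomial_prob K x (\<lambda>j. \<not> P j) = 1 - binomial_prob K x P"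
proof -
  have "binomial_prob K x P + binomial_prob K x (\<lambda>j. \<not> P j)
      = (\<Sum>j\<le>K. real (K choose j) * x ^ j * (1 - x) ^ (K - j))"
    unfolding binomial_prob_def by (subst sum.union_disjoint[symmetric]) (auto intro: sum.cong)
  also have "\<dots> = (x + (1 - x)) ^ K"
    by (rule binomial_ring[symmetric])
  finally show ?thesis by simp
qed

lemma tendsto_binomial_prob [tendsto_intros]:
  "(g \<longlongrightarrow> x) F \<Longrightarrow> ((\<lambda>n. binomial_prob K (g n) P) \<longlongrightarrow> binomial_prob K x P) F"
  unfolding binomial_prob_def by (intro tendsto_intros)

lemma binomial_prob_mono:
  assumes "0 \<le> x" "x \<le> 1" "\<And>j. P j \<Longrightarrow> Q j"
  shows "binomial_prob K x P \<le> binomial_prob K x Q"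
  unfolding binomial_prob_def using assms by (intro sum_mono2) auto

lemma binomial_prob_atMost_le:
  assumes "0 \<le> x" "x \<le> 1" "N \<le> K"
  shows "binomial_prob K x (\<lambda>j. j \<le> N) \<le> (real N + 1) * real K ^ N * (1 - x) ^ (K - N)"
proof -
  have "binomial_prob K x (\<lambda>j. j \<le> N) = (\<Sum>j\<le>N. real (K choose j) * x ^ j * (1 - x) ^ (K - j))"
    unfolding binomial_prob_def using assms(3) by (intro sum.cong) auto
  also have "\<dots> \<le> (\<Sum>j\<le>N. real K ^ N * (1 - x) ^ (K - N))"
  proof (rule sum_mono)
    fix j assume "j \<in> {..N}"
    then have j: "j \<le> N" by simp
    have "K choose j \<le> K ^ j"
      using j assms(3) by (intro binomial_le_pow) simp
    also have "\<dots> \<le> K ^ N"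
      using j assms(3) by (cases "K = 0") (auto intro: power_increasing)
    finally have "real (K choose j) \<le> real K ^ N"
      by (simp flip: of_nat_power)
    moreover have "x ^ j \<le> 1"
      using assms by (simp add: power_le_one)
    moreover have "(1 - x) ^ (K - j) \<le> (1 - x) ^ (K - N)"
      using assms j by (intro power_decreasing) auto
    ultimately have "real (K choose j) * x ^ j \<le> real K ^ N"
      using assms mult_mono[of "real (K choose j)" "real K ^ N" "x ^ j" 1] by simp
    with \<open>(1 - x) ^ (K - j) \<le> (1 - x) ^ (K - N)\<close> show
      "real (K choose j) * x ^ j * (1 - x) ^ (K - j) \<le> real K ^ N * (1 - x) ^ (K - N)"
      using assms by (intro mult_mono) auto
  qed
  finally show ?thesis by (simp add: ac_simps)
qed

lemma binomial_prob_lower_tail_tendsto_0: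
  fixes m :: "nat \<Rightarrow> real"
  assumes x: "0 < x" "x \<le> 1" and m: "m \<in> O(\<lambda>K. ln (real K))"
  shows "(\<lambda>K. binomial_prob K x (\<lambda>j. real j \<le> m K)) \<longlonglongrightarrow> 0"
proof -
  obtain C where C: "C > 0" and m_le: "eventually (\<lambda>K. norm (m K) \<le> C * norm (ln (real K))) at_top"
    using m by (elim landau_o.bigE)
  \<comment> \<open>a positive majorant of \<open>1 - x\<close>, so that \<open>powr\<close> can be used even for \<open>x = 1\<close>\<close>
  define s where "s = 1 - x / 2"
  have s: "0 < s" "s < 1" "1 - x \<le> s" using x by (auto simp: s_def)
  define h where "h K = (C * ln K + 1) * K powr (C * ln K) * s powr (K - C * ln K)" for K :: real
  have h_lim: "(\<lambda>K. h (real K)) \<longlonglongrightarrow> 0"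
    unfolding h_def using C s by real_asymp
  have "eventually (\<lambda>K. C * ln (real K) < real K) at_top"
    using C by real_asymp
  then have bound: "eventually (\<lambda>K. binomial_prob K x (\<lambda>j. real j \<le> m K) \<le> h (real K)) at_top"
    using m_le eventually_ge_at_top[of 1]
  proof eventually_elim
    case (elim K)
    define N where "N = nat \<lfloor>m K\<rfloor>"
    have lnK: "0 \<le> ln (real K)" using elim by simp
    have N_le: "real N \<le> C * ln (real K)"
    proof (cases "m K < 0")
      case True
      then show ?thesis
        using C lnK by (simp add: N_def)
    next
      case False
      then have "real N = of_int \<lfloor>m K\<rfloor>"
        by (simp add: N_def)
      also have "\<dots> \<le> m K"
        by (rule of_int_floor_le)
      finally show ?thesis
        using elim by simp
    qed
    have NK: "N \<le> K"
      using N_le elim by linarith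
    have "binomial_prob K x (\<lambda>j. real j \<le> m K) \<le> binomial_prob K x (\<lambda>j. j \<le> N)"
      using x by (intro binomial_prob_mono) (auto simp: N_def le_nat_floor)
    also have "\<dots> \<le> (real N + 1) * real K ^ N * (1 - x) ^ (K - N)"
      using x NK by (intro binomial_prob_atMost_le) auto
    also have "\<dots> \<le> (C * ln (real K) + 1) * real K powr (C * ln (real K)) * s powr (real K - C * ln (real K))"
    proof (intro mult_mono)
      have "real K ^ N = real K powr real N"
        using elim by (simp add: powr_realpow)
      also have "\<dots> \<le> real K powr (C * ln (real K))"
        using elim N_le by (intro powr_mono) auto
      finally show "real K ^ N \<le> real K powr (C * ln (real K))" .
      have "(1 - x) ^ (K - N) \<le> s ^ (K - N)"
        using x s by (intro power_mono) auto
      also have "\<dots> = s powr real (K - N)"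
        using s by (simp add: powr_realpow)
      also have "\<dots> \<le> s powr (real K - C * ln (real K))"
        using s N_le NK by (intro powr_mono') (auto simp: of_nat_diff)
      finally show "(1 - x) ^ (K - N) \<le> s powr (real K - C * ln (real K))" .
    qed (use N_le x in auto)
    finally show ?case by (simp add: h_def)
  qed
  have "eventually (\<lambda>K. 0 \<le> binomial_prob K x (\<lambda>j. real j \<le> m K)) at_top"
    using x by (intro always_eventually allI binomial_prob_nonneg) auto
  from tendsto_sandwich[OF this bound tendsto_const h_lim] show ?thesis .
qed

lemma sum_subsets_by_card:
  fixes g :: "nat \<Rightarrow> 'b::comm_semiring_1"
  assumes "finite I"
  shows "(\<Sum>T | T \<subseteq> I \<and> P (card T). g (card T))
    = (\<Sum>j | j \<le> card I \<and> P j. of_nat (card I choose j) * g j)"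
proof -
  have fin: "finite {T. T \<subseteq> I \<and> P (card T)}"
    using assms by (rule finite_subset[rotated, OF finite_Pow_iff[THEN iffD2]]) auto
  have "(\<Sum>T | T \<subseteq> I \<and> P (card T). g (card T))
      = (\<Sum>j | j \<le> card I \<and> P j. \<Sum>T | T \<in> {T. T \<subseteq> I \<and> P (card T)} \<and> card T = j. g (card T))"
    using assms fin by (intro sum.group[symmetric]) (auto intro: card_mono)
  also have "\<dots> = (\<Sum>j | j \<le> card I \<and> P j. of_nat (card I choose j) * g j)"
  proof (rule sum.cong[OF refl])
    fix j assume "j \<in> {j. j \<le> card I \<and> P j}"
    then have "{T. T \<in> {T. T \<subseteq> I \<and> P (card T)} \<and> card T = j} = {T. T \<subseteq> I \<and> card T = j}"
      by auto
    then show "(\<Sum>T | T \<in> {T. T \<subseteq> I \<and> P (card T)} \<and> card T = j. g (card T)) = of_nat (card I choose j) * g j"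
      using n_subsets[OF assms] by simp
  qed
  finally show ?thesis .
qed

text \<open>Intersecting with \<open>space M\<close> keeps the statement true for \<open>I = {}\<close>.\<close>

lemma (in prob_space) prob_indep_events_pattern:
  assumes ind: "indep_events A I" and I: "finite I" and T: "T \<subseteq> I"
    and pr: "\<And>k. k \<in> I \<Longrightarrow> prob (A k) = x"
  shows "prob (space M \<inter> (\<Inter>k\<in>I. if k \<in> T then A k else space M - A k))
    = x ^ card T * (1 - x) ^ card (I - T)"
proof (cases "I = {}")
  case False
  have ev: "\<And>k. k \<in> I \<Longrightarrow> A k \<in> events"
    using ind by (auto simp: indep_events_def)
  have "indep_sets (\<lambda>k. sigma_sets (space M) {A k}) I"
    by (rule indep_sets_sigma) (use ind in \<open>auto simp: indep_events_def_alt Int_stable_def\<close>)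
  then have "prob (\<Inter>k\<in>I. if k \<in> T then A k else space M - A k)
      = (\<Prod>k\<in>I. prob (if k \<in> T then A k else space M - A k))"
    by (rule indep_setsD) (use I False in \<open>auto intro: sigma_sets.Basic sigma_sets.Compl\<close>)
  also have "\<dots> = (\<Prod>k\<in>I. if k \<in> T then x else 1 - x)"
    by (rule prod.cong) (auto simp: prob_compl ev pr)
  also have "\<dots> = x ^ card T * (1 - x) ^ card (I - T)"
    using I T by (simp add: prod.If_cases Int_absorb1 Diff_eq)
  moreover obtain k0 where "k0 \<in> I"
    using False by blast
  then have "(\<Inter>k\<in>I. if k \<in> T then A k else space M - A k) \<subseteq> space M"
    using ev[of k0] sets.sets_into_space[of "A k0"] by (intro order.trans[OF INT_lower[OF \<open>k0 \<in> I\<close>]]) auto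
  ultimately show ?thesis
    by (simp add: Int_absorb1)
qed (use T in \<open>simp add: prob_space\<close>)

lemma (in prob_space) prob_card_indep_events:
  assumes ind: "indep_events A I" and I: "finite I" and pr: "\<And>k. k \<in> I \<Longrightarrow> prob (A k) = x"
  shows "prob {\<omega> \<in> space M. P (card {k \<in> I. \<omega> \<in> A k})} = binomial_prob (card I) x P"
proof -
  define atom where "atom T = space M \<inter> (\<Inter>k\<in>I. if k \<in> T then A k else space M - A k)" for T
  have ev: "\<And>k. k \<in> I \<Longrightarrow> A k \<in> events"
    using ind by (auto simp: indep_events_def)
  have atom_iff: "\<omega> \<in> atom T \<longleftrightarrow> \<omega> \<in> space M \<and> {k \<in> I. \<omega> \<in> A k} = T" if "T \<subseteq> I" for T \<omega>
    using that by (auto simp: atom_def)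
  have atom_ev: "atom T \<in> events" for T
  proof (cases "I = {}")
    case False
    then show ?thesis
      unfolding atom_def using I ev by (intro sets.Int sets.top sets.finite_INT) auto
  qed (simp add: atom_def)
  have "{\<omega> \<in> space M. P (card {k \<in> I. \<omega> \<in> A k})} = (\<Union>T \<in> {T. T \<subseteq> I \<and> P (card T)}. atom T)"
    using atom_iff by auto
  then have "prob {\<omega> \<in> space M. P (card {k \<in> I. \<omega> \<in> A k})}
      = (\<Sum>T | T \<subseteq> I \<and> P (card T). prob (atom T))"
    using I atom_ev atom_iff
    by (simp, intro finite_measure_finite_Union)
       (auto simp: disjoint_family_on_def intro!: finite_subset[OF _ finite_Pow_iff[THEN iffD2, OF I]])
  also have "\<dots> = (\<Sum>T | T \<subseteq> I \<and> P (card T). x ^ card T * (1 - x) ^ (card I - card T))"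
    unfolding atom_def using I
    by (intro sum.cong refl, subst prob_indep_events_pattern[OF ind I _ pr])
       (auto simp: card_Diff_subset finite_subset)
  also have "\<dots> = binomial_prob (card I) x P"
    unfolding binomial_prob_def
    using sum_subsets_by_card[OF I, where g = "\<lambda>j. x ^ j * (1 - x) ^ (card I - j)"]
    by (simp add: mult.assoc)
  finally show ?thesis .
qed

lemma lili_event_eq_count:
  "lili_event M A K f = {\<omega> \<in> space M. real K - f K < real (card {k \<in> {..<K}. \<omega> \<in> A k})}"
proof (intro set_eqI iffI)
  fix \<omega>
  assume "\<omega> \<in> lili_event M A K f"
  then obtain S where S: "S \<subseteq> {..<K}" "real K - f K < real (card S)" "\<omega> \<in> space M" "\<forall>k\<in>S. \<omega> \<in> A k"
    unfolding lili_event_def by blast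
  have "card S \<le> card {k \<in> {..<K}. \<omega> \<in> A k}"
    by (rule card_mono) (use S in auto)
  with S show "\<omega> \<in> {\<omega> \<in> space M. real K - f K < real (card {k \<in> {..<K}. \<omega> \<in> A k})}"
    by simp
next
  fix \<omega>
  assume "\<omega> \<in> {\<omega> \<in> space M. real K - f K < real (card {k \<in> {..<K}. \<omega> \<in> A k})}"
  then show "\<omega> \<in> lili_event M A K f"
    unfolding lili_event_def by (intro UN_I[of "{k \<in> {..<K}. \<omega> \<in> A k}"]) auto
qed

lemma (in prob_space) prob_lili_event:
  assumes "indep_events A {..<K}" and "\<And>k. k < K \<Longrightarrow> prob (A k) = x"
  shows "prob (lili_event M A K f) = binomial_prob K x (\<lambda>j. real K - f K < real j)"
  using prob_card_indep_events[of A "{..<K}" x] assms by (simp add: lili_event_eq_count)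

lemma filterlim_div_2_powr_imp_bigo_ln:
  fixes m :: "nat \<Rightarrow> real"
  assumes pos: "eventually (\<lambda>K. 0 < m K) at_top"
    and lim: "filterlim (\<lambda>K. real K / (m K * 2 powr m K)) at_top at_top"
  shows "m \<in> O(\<lambda>K. ln (real K))"
proof (rule bigoI)
  have "eventually (\<lambda>K. 1 \<le> real K / (m K * 2 powr m K)) at_top"
    using lim by (simp add: filterlim_at_top)
  then show "eventually (\<lambda>K. norm (m K) \<le> (1 / ln 2) * norm (ln (real K))) at_top"
    using pos eventually_ge_at_top[of 2]
  proof eventually_elim
    case (elim K)
    have "ln 2 \<le> ln (real K)"
      using elim by simp
    have "m K * ln 2 \<le> ln (real K)"
    proof (cases "1 \<le> m K")
      case True
      have "2 powr m K \<le> m K * 2 powr m K"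
        using True by simp
      also have "\<dots> \<le> real K"
        using elim by (simp add: le_divide_eq)
      finally have "ln (2 powr m K) \<le> ln (real K)"
        using elim by (subst ln_le_cancel_iff) auto
      then show ?thesis
        by (simp add: ln_powr)
    next
      case False
      then have "m K * ln 2 \<le> 1 * ln 2"
        by (intro mult_right_mono) auto
      with \<open>ln 2 \<le> ln (real K)\<close> show ?thesis
        by linarith
    qed
    then show ?case
      using elim by (simp add: le_divide_eq)
  qed
qed

theorem mainTheorem14:
  fixes M :: "nat \<Rightarrow> nat \<Rightarrow> 'a measure"
    and E :: "nat \<Rightarrow> nat \<Rightarrow> nat \<Rightarrow> 'a set"
    and pL :: "nat \<Rightarrow> real"
    and p :: real
    and f :: "nat \<Rightarrow> real"
  assumes ps: "\<And>n K. prob_space (M n K)"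
    and meas: "\<And>n K k. k < K \<Longrightarrow> E n K k \<in> sets (M n K)"
    and indep: "\<And>n K. prob_space.indep_events (M n K) (E n K) {..<K}"
    and probL: "\<And>n K k. k < K \<Longrightarrow> measure (M n K) (E n K k) = pL n"
    and lim_p: "pL \<longlonglongrightarrow> p"
    and f_bounds: "\<And>K. K \<ge> 1 \<Longrightarrow> 0 < f K \<and> f K < real K"
  shows "(p > 0 \<and> ((\<lambda>K. (real K - f K) / ln (real K)) \<longlongrightarrow> 0) at_top
            \<longrightarrow> (\<exists>q. (\<forall>K. (\<lambda>n. measure (M n K) (lili_event (M n K) (E n K) K f)) \<longlonglongrightarrow> q K)
                     \<and> q \<longlonglongrightarrow> 1))
       \<and> (p > 1/2 \<and> filterlim (\<lambda>K. real K / ((real K - f K) * 2 powr (real K - f K))) at_top at_top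
            \<longrightarrow> (\<exists>q. (\<forall>K. (\<lambda>n. measure (M n K) (lili_event (M n K) (E n K) K f)) \<longlonglongrightarrow> q K)
                     \<and> q \<longlonglongrightarrow> 1))"
proof -
  define q where "q K = binomial_prob K p (\<lambda>j. real K - f K < real j)" for K
  have m_pos: "eventually (\<lambda>K. 0 < real K - f K) at_top"
    using eventually_ge_at_top[of 1] by (rule eventually_mono) (use f_bounds in auto)
  have conv: "\<forall>K. (\<lambda>n. measure (M n K) (lili_event (M n K) (E n K) K f)) \<longlonglongrightarrow> q K"
    using prob_space.prob_lili_event[OF ps indep probL] lim_p by (simp add: q_def tendsto_intros)
  have "0 \<le> pL n \<and> pL n \<le> 1" for n
    using probL[of 0 1 n] prob_space.prob_le_1[OF ps] by (metis measure_nonneg zero_less_one)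
  then have "0 \<le> p" "p \<le> 1"
    using lim_p by (auto intro: LIMSEQ_le_const LIMSEQ_le_const2)
  have "q \<longlonglongrightarrow> 1" if "0 < p" and "(\<lambda>K. real K - f K) \<in> O(\<lambda>K. ln (real K))"
  proof -
    have "(\<lambda>K. 1 - q K) \<longlonglongrightarrow> 0"
      using binomial_prob_lower_tail_tendsto_0[OF \<open>0 < p\<close> \<open>p \<le> 1\<close> that(2)]
      by (simp add: q_def not_less flip: binomial_prob_compl)
    then have "(\<lambda>K. 1 - (1 - q K)) \<longlonglongrightarrow> 1 - 0"
      by (intro tendsto_intros)
    then show ?thesis
      by simp
  qed
  moreover have "(\<lambda>K. real K - f K) \<in> O(\<lambda>K. ln (real K))"
    if "((\<lambda>K. (real K - f K) / ln (real K)) \<longlongrightarrow> 0) at_top"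
    using that by (intro bigoI_tendsto) (auto intro: eventually_mono[OF eventually_gt_at_top[of 1]])
  moreover have "(\<lambda>K. real K - f K) \<in> O(\<lambda>K. ln (real K))"
    if "filterlim (\<lambda>K. real K / ((real K - f K) * 2 powr (real K - f K))) at_top at_top"
    using m_pos that by (rule filterlim_div_2_powr_imp_bigo_ln)
  ultimately show ?thesis
    using conv by auto
qed

end
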